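(* Let $0<\varepsilon_0\le1$ and let $A,B,C$ be $(h_A,k_A)$-, $(h_B,k_B)$-, $(h_C,k_C)$-expansions on $(0,\varepsilon_0]$. With the operations on expansions defined in the context, the following hold as identities of expansions (equal parameters $h,k$, equal coefficients and equal remainders for the two sides): (i) $A+0=A$ where $0$ is the $(h_A,k_A)$-expansion with zero coefficients and zero remainder; $A\cdot1=A$ where $1$ is the $(0,k_A-h_A)$-expansion $1+0\varepsilon+\dots+0\varepsilon^{k_A-h_A}$ with zero remainder; $A+(-1)A=0$ (the $(h_A,k_A)$-expansion of $0$); and, if $A$ is pivotal, $A\cdot A^{-1}=1$ (the $(0,k_A-h_A)$-expansion of $1$), valid on an interval $(0,\varepsilon'_0]$ where $A(\varepsilon)\ne0$; (ii) $A+B=B+A$ and $(A+B)+C=A+(B+C)$; (iii) $A\cdot B=B\cdot A$ and $(A\cdot B)\cdot C=A\cdot(B\cdot C)$; (iv) $(A+B)\cdot C=A\cdot C+B\cdot C$.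
   Context: A $(h,k)$-expansion of a real function $A$ on $(0,\varepsilon_0]$: $A(\varepsilon)=\sum_{l=h}^ka_l\varepsilon^l+o_A(\varepsilon^k)$ with integers $h\le k$, real $a_l$, $o_A(\varepsilon^k)/\varepsilon^k\to0$; pivotal means $a_h\ne0$. Operations (with $\wedge$ = min): Scalar multiple $cA$: $(h_A,k_A)$-expansion with coefficients $ca_l$ and remainder $co_A$. Sum $A+B$: $(h_A\wedge h_B,\,k_A\wedge k_B)$-expansion with coefficients $a_l+b_l$ (missing coefficients below $h_A$ resp. $h_B$ taken as $0$) and remainder $\sum_{k<i\le k_A}a_i\varepsilon^i+\sum_{k<j\le k_B}b_j\varepsilon^j+o_A+o_B$ where $k=k_A\wedge k_B$. Product $A\cdot B$: $(h_A+h_B,\,(k_A+h_B)\wedge(k_B+h_A))$-expansion with coefficients $c_{h_A+h_B+r}=\sum_{0\le i\le r}a_{h_A+i}b_{h_B+r-i}$ and remainder $\sum_{k<i+j}a_ib_j\varepsilon^{i+j}+\sum_ia_i\varepsilon^io_B+\sum_jb_j\varepsilon^jo_A+o_Ao_B$, $k$ being the new upper parameter. Reciprocal $B^{-1}$ of a pivotal $B$ (on an interval where $B\ne0$): $(-h_B,\,k_B-2h_B)$-expansion with $c_{-h_B}=b_{h_B}^{-1}$, $c_{-h_B+r}=-b_{h_B}^{-1}\sum_{1\le i\le r}b_{h_B+i}c_{-h_B+r-i}$, and remainder equal to $B^{-1}$ minus this polynomial. *)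

theory Defs
  imports Complex_Main
begin

text \<open>An (h,k)-expansion: parameters h \<le> k (integers), coefficients a_l (only
  l in [h,k] are meaningful) and a remainder function o_A.\<close>

record expn =
  lo :: int
  hi :: int
  cf :: "int \<Rightarrow> real"
  rm :: "real \<Rightarrow> real"

definition cf_at :: "expn \<Rightarrow> int \<Rightarrow> real" where
  "cf_at E l = (if lo E \<le> l \<and> l \<le> hi E then cf E l else 0)"

definition poly_part :: "expn \<Rightarrow> real \<Rightarrow> real" where
  "poly_part E x = (\<Sum>l\<in>{lo E..hi E}. cf_at E l * x powi l)"

definition expn_val :: "expn \<Rightarrow> real \<Rightarrow> real" where
  "expn_val E x = poly_part E x + rm E x"

definition is_expn :: "expn \<Rightarrow> bool" where
  "is_expn E \<longleftrightarrow> lo E \<le> hi E \<and>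
     ((\<lambda>x. rm E x / x powi hi E) \<longlongrightarrow> 0) (at_right 0)"

definition pivotal :: "expn \<Rightarrow> bool" where
  "pivotal E \<longleftrightarrow> cf E (lo E) \<noteq> 0"

definition expn_eq_on :: "real \<Rightarrow> expn \<Rightarrow> expn \<Rightarrow> bool" where
  "expn_eq_on e E F \<longleftrightarrow> lo E = lo F \<and> hi E = hi F \<and>
     (\<forall>l\<in>{lo E..hi E}. cf E l = cf F l) \<and>
     (\<forall>x\<in>{0<..e}. rm E x = rm F x)"

definition expn_zero :: "int \<Rightarrow> int \<Rightarrow> expn" where
  "expn_zero h k = \<lparr>lo = h, hi = k, cf = (\<lambda>_. 0), rm = (\<lambda>_. 0)\<rparr>"

definition expn_one :: "int \<Rightarrow> expn" where
  "expn_one k = \<lparr>lo = 0, hi = k, cf = (\<lambda>l. if l = 0 then 1 else 0), rm = (\<lambda>_. 0)\<rparr>"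

definition expn_scale :: "real \<Rightarrow> expn \<Rightarrow> expn" where
  "expn_scale c A = \<lparr>lo = lo A, hi = hi A, cf = (\<lambda>l. c * cf A l),
                      rm = (\<lambda>x. c * rm A x)\<rparr>"

definition expn_add :: "expn \<Rightarrow> expn \<Rightarrow> expn" where
  "expn_add A B = (let k = min (hi A) (hi B) in
     \<lparr>lo = min (lo A) (lo B), hi = k,
      cf = (\<lambda>l. cf_at A l + cf_at B l),
      rm = (\<lambda>x. (\<Sum>i\<in>{k<..hi A}. cf_at A i * x powi i)
              + (\<Sum>j\<in>{k<..hi B}. cf_at B j * x powi j) + rm A x + rm B x)\<rparr>)"

definition expn_mult :: "expn \<Rightarrow> expn \<Rightarrow> expn" where
  "expn_mult A B = (let h = lo A + lo B; k = min (hi A + lo B) (hi B + lo A) in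
     \<lparr>lo = h, hi = k,
      cf = (\<lambda>l. if h \<le> l then
                  (\<Sum>i\<in>{0..nat (l - h)}. cf_at A (lo A + int i) * cf_at B (lo B + (l - h) - int i))
                else 0),
      rm = (\<lambda>x. (\<Sum>i\<in>{lo A..hi A}. \<Sum>j\<in>{lo B..hi B}.
                    if k < i + j then cf_at A i * cf_at B j * x powi (i + j) else 0)
              + (\<Sum>i\<in>{lo A..hi A}. cf_at A i * x powi i) * rm B x
              + (\<Sum>j\<in>{lo B..hi B}. cf_at B j * x powi j) * rm A x
              + rm A x * rm B x)\<rparr>)"

text \<open>Coefficients c_{-h+r} of the reciprocal, given b (coefficient function) and h.\<close>
fun recip_c :: "(int \<Rightarrow> real) \<Rightarrow> int \<Rightarrow> nat \<Rightarrow> real" where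
  "recip_c b h r = (if r = 0 then inverse (b h)
     else - inverse (b h) * (\<Sum>i\<in>{1..r}. b (h + int i) * recip_c b h (r - i)))"

definition expn_inv :: "expn \<Rightarrow> expn" where
  "expn_inv B = (let h = lo B; k = hi B;
       c = (\<lambda>l. if - h \<le> l \<and> l \<le> k - 2 * h then recip_c (cf_at B) h (nat (l + h)) else 0) in
     \<lparr>lo = - h, hi = k - 2 * h, cf = c,
      rm = (\<lambda>x. inverse (expn_val B x) - (\<Sum>l\<in>{- h..k - 2 * h}. c l * x powi l))\<rparr>)"

end

theory Submission
  imports Defs
begin

text \<open>Both sides of each identity have the same parameters by \<open>min\<close>/\<open>+\<close> arithmetic. Since a
  remainder is the value of the expansion minus its polynomial part, it then suffices to compare
  coefficients and values. The operations act on values as sum, product and reciprocal, and the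
  coefficients of a product form the Cauchy convolution of the (zero-extended) coefficient
  sequences, whose commutativity, associativity and distributivity are reindexings of finite sums.
  The recursion defining the coefficients of the reciprocal says precisely that its convolution
  with the coefficients of the original expansion is the unit sequence.\<close>

lemma sum_int_reflect: "(\<Sum>i\<in>{a..b::int}. f (l - i)) = (\<Sum>j\<in>{l - b..l - a}. f j)"
  by (rule sum.reindex_bij_witness[where i="\<lambda>j. l - j" and j="\<lambda>i. l - i"]) auto

lemma sum_int_shift: "(\<Sum>j\<in>{a..b::int}. f j) = (\<Sum>i\<in>{a - c..b - c}. f (i + c))"
  by (rule sum.reindex_bij_witness[where i="\<lambda>i. i + c" and j="\<lambda>j. j - c"]) auto

lemma expn_zero_sel [simp]:
  "lo (expn_zero h k) = h" "hi (expn_zero h k) = k"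
  "cf (expn_zero h k) = (\<lambda>_. 0)" "rm (expn_zero h k) = (\<lambda>_. 0)"
  by (simp_all add: expn_zero_def)

lemma expn_one_sel [simp]:
  "lo (expn_one n) = 0" "hi (expn_one n) = n"
  "cf (expn_one n) = (\<lambda>l. if l = 0 then 1 else 0)" "rm (expn_one n) = (\<lambda>_. 0)"
  by (simp_all add: expn_one_def)

lemma expn_scale_sel [simp]:
  "lo (expn_scale c A) = lo A" "hi (expn_scale c A) = hi A"
  "cf (expn_scale c A) = (\<lambda>l. c * cf A l)" "rm (expn_scale c A) = (\<lambda>x. c * rm A x)"
  by (simp_all add: expn_scale_def)

lemma expn_add_sel [simp]:
  "lo (expn_add A B) = min (lo A) (lo B)" "hi (expn_add A B) = min (hi A) (hi B)"
  "cf (expn_add A B) = (\<lambda>l. cf_at A l + cf_at B l)"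
  "rm (expn_add A B) = (\<lambda>x. (\<Sum>i\<in>{min (hi A) (hi B)<..hi A}. cf_at A i * x powi i)
      + (\<Sum>j\<in>{min (hi A) (hi B)<..hi B}. cf_at B j * x powi j) + rm A x + rm B x)"
  by (simp_all add: expn_add_def Let_def)

lemma expn_mult_sel [simp]:
  "lo (expn_mult A B) = lo A + lo B"
  "hi (expn_mult A B) = min (hi A + lo B) (hi B + lo A)"
  "rm (expn_mult A B) = (\<lambda>x. (\<Sum>i\<in>{lo A..hi A}. \<Sum>j\<in>{lo B..hi B}.
        if min (hi A + lo B) (hi B + lo A) < i + j then cf_at A i * cf_at B j * x powi (i + j) else 0)
      + (\<Sum>i\<in>{lo A..hi A}. cf_at A i * x powi i) * rm B x
      + (\<Sum>j\<in>{lo B..hi B}. cf_at B j * x powi j) * rm A x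
      + rm A x * rm B x)"
  by (simp_all add: expn_mult_def Let_def)

lemma expn_inv_sel [simp]: "lo (expn_inv A) = - lo A" "hi (expn_inv A) = hi A - 2 * lo A"
  by (simp_all add: expn_inv_def Let_def)

lemma cf_at_eq_0: "l < lo E \<or> hi E < l \<Longrightarrow> cf_at E l = 0"
  by (auto simp: cf_at_def)

lemma cf_at_expn_zero [simp]: "cf_at (expn_zero h k) l = 0"
  by (simp add: cf_at_def)

lemma cf_at_expn_one: "0 \<le> n \<Longrightarrow> cf_at (expn_one n) l = (if l = 0 then 1 else 0)"
  by (simp add: cf_at_def)

lemma cf_at_expn_scale: "cf_at (expn_scale c A) l = c * cf_at A l"
  by (simp add: cf_at_def)

lemma cf_at_expn_add: "l \<le> hi (expn_add A B) \<Longrightarrow> cf_at (expn_add A B) l = cf_at A l + cf_at B l"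
  by (auto simp: cf_at_def)

lemma cf_at_expn_mult:
  assumes "l \<le> hi (expn_mult A B)"
  shows "cf_at (expn_mult A B) l = (\<Sum>i\<in>{lo A..hi A}. cf_at A i * cf_at B (l - i))"
proof (cases "lo A + lo B \<le> l")
  case True
  have "cf_at (expn_mult A B) l = (\<Sum>r\<in>{0..nat (l - (lo A + lo B))}.
      cf_at A (lo A + int r) * cf_at B (lo B + (l - (lo A + lo B)) - int r))"
    using True assms by (simp add: cf_at_def expn_mult_def Let_def)
  also have "\<dots> = (\<Sum>i\<in>{lo A..l - lo B}. cf_at A i * cf_at B (l - i))"
    by (rule sum.reindex_bij_witness[where i="\<lambda>i. nat (i - lo A)" and j="\<lambda>r. lo A + int r"])
      (use True in \<open>auto simp: algebra_simps\<close>)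
  also have "\<dots> = (\<Sum>i\<in>{lo A..hi A}. cf_at A i * cf_at B (l - i))"
    by (rule sum.mono_neutral_cong) (auto simp: cf_at_eq_0)
  finally show ?thesis .
next
  case False
  then show ?thesis
    by (auto simp: cf_at_def cf_at_eq_0 intro!: sum.neutral[symmetric])
qed

lemma cf_at_expn_inv:
  "cf_at (expn_inv A) l =
    (if - lo A \<le> l \<and> l \<le> hi A - 2 * lo A then recip_c (cf_at A) (lo A) (nat (l + lo A)) else 0)"
  by (simp add: cf_at_def expn_inv_def Let_def)

lemma recip_c_convolution:
  assumes "b h \<noteq> 0"
  shows "(\<Sum>r\<in>{0..n}. b (h + int r) * recip_c b h (n - r)) = (if n = 0 then 1 else 0)"
proof (cases "n = 0")
  case False
  have "{0..n} = insert 0 {1..n}" by auto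
  then have "(\<Sum>r\<in>{0..n}. b (h + int r) * recip_c b h (n - r))
      = b h * recip_c b h n + (\<Sum>r\<in>{1..n}. b (h + int r) * recip_c b h (n - r))"
    by simp
  also have "b h * recip_c b h n = - (\<Sum>r\<in>{1..n}. b (h + int r) * recip_c b h (n - r))"
    using False assms by (subst recip_c.simps) simp
  finally show ?thesis using False by simp
qed (use assms in simp)

lemma poly_part_cong:
  assumes "lo E = lo F" "hi E = hi F" "\<And>l. l \<in> {lo E..hi E} \<Longrightarrow> cf_at E l = cf_at F l"
  shows "poly_part E x = poly_part F x"
  unfolding poly_part_def using assms by (intro sum.cong) auto

lemma expn_val_zero [simp]: "expn_val (expn_zero h k) x = 0"
  by (simp add: expn_val_def poly_part_def)

lemma expn_val_one:
  assumes "0 \<le> n"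
  shows "expn_val (expn_one n) x = 1"
proof -
  have "poly_part (expn_one n) x = (\<Sum>l\<in>{0..n}. if l = 0 then 1 else 0)"
    unfolding poly_part_def using assms by (intro sum.cong) (auto simp: cf_at_expn_one)
  also have "\<dots> = 1" using assms by simp
  finally show ?thesis by (simp add: expn_val_def)
qed

lemma expn_val_scale: "expn_val (expn_scale c A) x = c * expn_val A x"
  by (simp add: expn_val_def poly_part_def cf_at_expn_scale sum_distrib_left algebra_simps)

lemma expn_val_add: "expn_val (expn_add A B) x = expn_val A x + expn_val B x"
proof -
  define m where "m = min (lo A) (lo B)"
  define k where "k = min (hi A) (hi B)"
  have split: "(\<Sum>l\<in>{m..k}. cf_at E l * x powi l) + (\<Sum>i\<in>{k<..hi E}. cf_at E i * x powi i)
      = poly_part E x" if "m \<le> lo E" "k \<le> hi E" for E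
  proof -
    have "(\<Sum>l\<in>{m..k}. cf_at E l * x powi l) + (\<Sum>i\<in>{k<..hi E}. cf_at E i * x powi i)
        = (\<Sum>l\<in>{m..k} \<union> {k<..hi E}. cf_at E l * x powi l)"
      by (rule sum.union_disjoint[symmetric]) auto
    also have "\<dots> = poly_part E x"
      unfolding poly_part_def by (rule sum.mono_neutral_cong) (use that in \<open>auto simp: cf_at_eq_0\<close>)
    finally show ?thesis .
  qed
  have "poly_part (expn_add A B) x
      = (\<Sum>l\<in>{m..k}. cf_at A l * x powi l) + (\<Sum>l\<in>{m..k}. cf_at B l * x powi l)"
    unfolding poly_part_def m_def k_def
    by (simp add: sum.distrib[symmetric] cf_at_expn_add distrib_right)
  moreover have "m \<le> lo A" "m \<le> lo B" "k \<le> hi A" "k \<le> hi B"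
    by (auto simp: m_def k_def)
  ultimately show ?thesis
    using split[of A] split[of B] unfolding expn_val_def by (simp add: m_def k_def)
qed

text \<open>The truncated double sum in the product's remainder is exactly the part of
  \<open>poly_part A x * poly_part B x\<close> missing from the product's polynomial part.\<close>

lemma expn_val_mult:
  assumes "x \<noteq> 0"
  shows "expn_val (expn_mult A B) x = expn_val A x * expn_val B x"
proof -
  define k where "k = min (hi A + lo B) (hi B + lo A)"
  define X where "X i j = cf_at A i * cf_at B j * x powi (i + j)" for i j
  let ?low = "\<Sum>i\<in>{lo A..hi A}. \<Sum>j\<in>{lo B..hi B}. if k < i + j then 0 else X i j"
  let ?high = "\<Sum>i\<in>{lo A..hi A}. \<Sum>j\<in>{lo B..hi B}. if k < i + j then X i j else 0"
  have "poly_part (expn_mult A B) x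
      = (\<Sum>l\<in>{lo A + lo B..k}. (\<Sum>i\<in>{lo A..hi A}. cf_at A i * cf_at B (l - i)) * x powi l)"
    unfolding poly_part_def k_def by (intro sum.cong) (auto simp: cf_at_expn_mult)
  also have "\<dots> = (\<Sum>i\<in>{lo A..hi A}. \<Sum>l\<in>{lo A + lo B..k}. cf_at A i * cf_at B (l - i) * x powi l)"
    by (simp add: sum_distrib_right sum.swap[of _ "{lo A + lo B..k}"])
  also have "\<dots> = ?low"
  proof (rule sum.cong[OF refl])
    fix i assume i: "i \<in> {lo A..hi A}"
    have "(\<Sum>l\<in>{lo A + lo B..k}. cf_at A i * cf_at B (l - i) * x powi l)
        = (\<Sum>j\<in>{lo A + lo B - i..k - i}. cf_at A i * cf_at B (j + i - i) * x powi (j + i))"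
      by (rule sum_int_shift)
    also have "\<dots> = (\<Sum>j\<in>{lo B..hi B}. if k < i + j then 0 else X i j)"
      by (rule sum.mono_neutral_cong) (use i in \<open>auto simp: X_def cf_at_eq_0 add.commute\<close>)
    finally show "(\<Sum>l\<in>{lo A + lo B..k}. cf_at A i * cf_at B (l - i) * x powi l)
        = (\<Sum>j\<in>{lo B..hi B}. if k < i + j then 0 else X i j)" .
  qed
  finally have low: "poly_part (expn_mult A B) x = ?low" .
  have "poly_part A x * poly_part B x = (\<Sum>i\<in>{lo A..hi A}. \<Sum>j\<in>{lo B..hi B}. X i j)"
    unfolding poly_part_def sum_product X_def using assms by (simp add: power_int_add ac_simps)
  also have "\<dots> = ?high + ?low"
    by (simp add: sum.distrib[symmetric] if_distrib if_distribR cong: if_cong)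
  finally have "poly_part A x * poly_part B x = ?high + ?low" .
  moreover have "rm (expn_mult A B) x
      = ?high + poly_part A x * rm B x + poly_part B x * rm A x + rm A x * rm B x"
    unfolding X_def k_def poly_part_def by simp
  ultimately show ?thesis
    unfolding expn_val_def low by (simp add: algebra_simps)
qed

lemma expn_val_inv: "expn_val (expn_inv A) x = inverse (expn_val A x)"
proof -
  have "poly_part (expn_inv A) x = (\<Sum>l\<in>{- lo A..hi A - 2 * lo A}.
      (if - lo A \<le> l \<and> l \<le> hi A - 2 * lo A then recip_c (cf_at A) (lo A) (nat (l + lo A)) else 0)
        * x powi l)"
    unfolding poly_part_def by (simp add: cf_at_expn_inv)
  then show ?thesis by (simp add: expn_val_def expn_inv_def Let_def)
qed

text \<open>The remainder of an expansion is determined by its value and its coefficients.\<close>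

lemma expn_eq_onI:
  assumes "lo E = lo F" "hi E = hi F" "\<And>l. l \<in> {lo E..hi E} \<Longrightarrow> cf_at E l = cf_at F l"
    and "\<And>x. x \<in> {0<..e} \<Longrightarrow> expn_val E x = expn_val F x"
  shows "expn_eq_on e E F"
  using assms poly_part_cong[OF assms(1-3)]
  unfolding expn_eq_on_def expn_val_def by (auto simp: cf_at_def)

lemma expn_add_zero: "expn_eq_on e (expn_add A (expn_zero (lo A) (hi A))) A"
  by (rule expn_eq_onI) (auto simp: cf_at_expn_add expn_val_add)

lemma expn_add_neg: "expn_eq_on e (expn_add A (expn_scale (-1) A)) (expn_zero (lo A) (hi A))"
  by (rule expn_eq_onI) (auto simp: cf_at_expn_add cf_at_expn_scale expn_val_add expn_val_scale)

lemma expn_add_commute: "expn_eq_on e (expn_add A B) (expn_add B A)"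
  by (rule expn_eq_onI) (auto simp: cf_at_expn_add expn_val_add)

lemma expn_add_assoc: "expn_eq_on e (expn_add (expn_add A B) C) (expn_add A (expn_add B C))"
  by (rule expn_eq_onI) (auto simp: cf_at_expn_add expn_val_add min.assoc)

lemma expn_mult_one:
  assumes "lo A \<le> hi A"
  shows "expn_eq_on e (expn_mult A (expn_one (hi A - lo A))) A"
proof (rule expn_eq_onI)
  fix l
  assume "l \<in> {lo (expn_mult A (expn_one (hi A - lo A)))..hi (expn_mult A (expn_one (hi A - lo A)))}"
  then have l: "l \<in> {lo A..hi A}" by simp
  have "cf_at (expn_mult A (expn_one (hi A - lo A))) l
      = (\<Sum>i\<in>{lo A..hi A}. cf_at A i * cf_at (expn_one (hi A - lo A)) (l - i))"
    using l by (intro cf_at_expn_mult) simp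
  also have "\<dots> = (\<Sum>i\<in>{lo A..hi A}. if i = l then cf_at A i else 0)"
    using assms by (intro sum.cong) (auto simp: cf_at_expn_one)
  also have "\<dots> = cf_at A l" using l by simp
  finally show "cf_at (expn_mult A (expn_one (hi A - lo A))) l = cf_at A l" .
qed (use assms in \<open>auto simp: expn_val_mult expn_val_one\<close>)

lemma expn_mult_commute: "expn_eq_on e (expn_mult A B) (expn_mult B A)"
proof (rule expn_eq_onI)
  fix l assume l: "l \<in> {lo (expn_mult A B)..hi (expn_mult A B)}"
  have "cf_at (expn_mult A B) l = (\<Sum>i\<in>{lo A..hi A}. (\<lambda>j. cf_at A (l - j) * cf_at B j) (l - i))"
    using l by (simp add: cf_at_expn_mult del: expn_mult_sel)
  also have "\<dots> = (\<Sum>j\<in>{l - hi A..l - lo A}. cf_at A (l - j) * cf_at B j)"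
    by (rule sum_int_reflect)
  also have "\<dots> = (\<Sum>j\<in>{lo B..hi B}. cf_at B j * cf_at A (l - j))"
    by (rule sum.mono_neutral_cong) (auto simp: cf_at_eq_0)
  also have "\<dots> = cf_at (expn_mult B A) l"
    using l by (intro cf_at_expn_mult[symmetric]) (simp add: ac_simps)
  finally show "cf_at (expn_mult A B) l = cf_at (expn_mult B A) l" .
qed (auto simp: expn_val_mult ac_simps)

lemma expn_mult_assoc:
  "expn_eq_on e (expn_mult (expn_mult A B) C) (expn_mult A (expn_mult B C))"
proof (rule expn_eq_onI)
  fix l assume l: "l \<in> {lo (expn_mult (expn_mult A B) C)..hi (expn_mult (expn_mult A B) C)}"
  let ?AB = "{lo A + lo B..min (hi A + lo B) (hi B + lo A)}"
  have inner: "(\<Sum>m\<in>?AB. cf_at B (m - i) * cf_at C (l - m))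
      = (\<Sum>j\<in>{lo B..hi B}. cf_at B j * cf_at C (l - i - j))" if i: "i \<in> {lo A..hi A}" for i
  proof -
    have "(\<Sum>m\<in>?AB. cf_at B (m - i) * cf_at C (l - m))
        = (\<Sum>j\<in>{lo A + lo B - i..min (hi A + lo B) (hi B + lo A) - i}.
            cf_at B (j + i - i) * cf_at C (l - (j + i)))"
      by (rule sum_int_shift)
    also have "\<dots> = (\<Sum>j\<in>{lo B..hi B}. cf_at B j * cf_at C (l - i - j))"
      by (rule sum.mono_neutral_cong) (use i l in \<open>auto simp: cf_at_eq_0 algebra_simps\<close>)
    finally show ?thesis .
  qed
  have "cf_at (expn_mult (expn_mult A B) C) l = (\<Sum>m\<in>?AB. cf_at (expn_mult A B) m * cf_at C (l - m))"
    using l by (subst cf_at_expn_mult) auto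
  also have "\<dots> = (\<Sum>m\<in>?AB. \<Sum>i\<in>{lo A..hi A}. cf_at A i * cf_at B (m - i) * cf_at C (l - m))"
    by (intro sum.cong refl) (simp add: cf_at_expn_mult sum_distrib_right)
  also have "\<dots> = (\<Sum>i\<in>{lo A..hi A}. cf_at A i * (\<Sum>m\<in>?AB. cf_at B (m - i) * cf_at C (l - m)))"
    by (subst sum.swap) (simp add: sum_distrib_left mult.assoc)
  also have "\<dots> = (\<Sum>i\<in>{lo A..hi A}. cf_at A i * (\<Sum>j\<in>{lo B..hi B}. cf_at B j * cf_at C (l - i - j)))"
    by (simp add: inner)
  also have "\<dots> = (\<Sum>i\<in>{lo A..hi A}. cf_at A i * cf_at (expn_mult B C) (l - i))"
    using l by (intro sum.cong refl arg_cong2[where f="(*)"], subst cf_at_expn_mult) auto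
  also have "\<dots> = cf_at (expn_mult A (expn_mult B C)) l"
    using l by (subst cf_at_expn_mult) auto
  finally show "cf_at (expn_mult (expn_mult A B) C) l = cf_at (expn_mult A (expn_mult B C)) l" .
qed (auto simp: expn_val_mult ac_simps min_add_distrib_left min_add_distrib_right)

lemma expn_mult_distrib:
  "expn_eq_on e (expn_mult (expn_add A B) C) (expn_add (expn_mult A C) (expn_mult B C))"
proof (rule expn_eq_onI)
  fix l assume l: "l \<in> {lo (expn_mult (expn_add A B) C)..hi (expn_mult (expn_add A B) C)}"
  let ?I = "{min (lo A) (lo B)..min (hi A) (hi B)}"
  have restrict: "(\<Sum>i\<in>?I. cf_at E i * cf_at C (l - i))
      = (\<Sum>i\<in>{lo E..hi E}. cf_at E i * cf_at C (l - i))"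
    if "min (lo A) (lo B) \<le> lo E" "l \<le> min (hi A) (hi B) + hi C" for E
    by (rule sum.mono_neutral_cong) (use l that in \<open>auto simp: cf_at_eq_0\<close>)
  have "cf_at (expn_mult (expn_add A B) C) l
      = (\<Sum>i\<in>?I. cf_at A i * cf_at C (l - i)) + (\<Sum>i\<in>?I. cf_at B i * cf_at C (l - i))"
    using l by (simp add: cf_at_expn_mult cf_at_expn_add sum.distrib[symmetric] distrib_right
        del: expn_mult_sel)
  also have "\<dots> = (\<Sum>i\<in>{lo A..hi A}. cf_at A i * cf_at C (l - i))
      + (\<Sum>i\<in>{lo B..hi B}. cf_at B i * cf_at C (l - i))"
    using l by (simp add: restrict)
  also have "\<dots> = cf_at (expn_add (expn_mult A C) (expn_mult B C)) l"
  proof -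
    have "l \<le> hi (expn_mult A C)" "l \<le> hi (expn_mult B C)"
      using l by auto
    then show ?thesis
      by (simp add: cf_at_expn_add cf_at_expn_mult del: expn_mult_sel)
  qed
  finally show "cf_at (expn_mult (expn_add A B) C) l
      = cf_at (expn_add (expn_mult A C) (expn_mult B C)) l" .
qed (auto simp: expn_val_mult expn_val_add algebra_simps min_add_distrib_left min_add_distrib_right)

lemma expn_mult_inverse:
  assumes "lo A \<le> hi A" "pivotal A" "\<forall>x\<in>{0<..e}. expn_val A x \<noteq> 0"
  shows "expn_eq_on e (expn_mult A (expn_inv A)) (expn_one (hi A - lo A))"
proof (rule expn_eq_onI)
  fix l assume "l \<in> {lo (expn_mult A (expn_inv A))..hi (expn_mult A (expn_inv A))}"
  then obtain n where n: "l = int n" "l \<le> hi A - lo A"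
    using nonneg_int_cases by fastforce
  have pivot: "cf_at A (lo A) \<noteq> 0"
    using assms by (simp add: cf_at_def pivotal_def)
  have "cf_at (expn_mult A (expn_inv A)) l
      = (\<Sum>i\<in>{0..n}. cf_at A (lo A + int i) * cf_at (expn_inv A) (- lo A + l - int i))"
    using n by (simp add: cf_at_def expn_mult_def Let_def)
  also have "\<dots> = (\<Sum>i\<in>{0..n}. cf_at A (lo A + int i) * recip_c (cf_at A) (lo A) (n - i))"
    using n by (intro sum.cong refl) (auto simp: cf_at_expn_inv nat_diff_distrib)
  also have "\<dots> = cf_at (expn_one (hi A - lo A)) l"
    using n by (simp add: recip_c_convolution[where b="cf_at A", OF pivot] cf_at_expn_one
        del: recip_c.simps)
  finally show "cf_at (expn_mult A (expn_inv A)) l = cf_at (expn_one (hi A - lo A)) l" .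
qed (use assms in \<open>auto simp: expn_val_mult expn_val_inv expn_val_one\<close>)

text \<open>All identities hold for arbitrary parameters and remainders; only \<open>lo A \<le> hi A\<close> is
  needed, for the unit expansions.\<close>

theorem lemma4:
  fixes e0 :: real and A B C :: expn
  assumes "0 < e0" "e0 \<le> 1"
    and "is_expn A" "is_expn B" "is_expn C"
  shows "expn_eq_on e0 (expn_add A (expn_zero (lo A) (hi A))) A
    \<and> expn_eq_on e0 (expn_mult A (expn_one (hi A - lo A))) A
    \<and> expn_eq_on e0 (expn_add A (expn_scale (-1) A)) (expn_zero (lo A) (hi A))
    \<and> (pivotal A \<longrightarrow> (\<forall>e'. 0 < e' \<and> e' \<le> e0 \<and> (\<forall>x\<in>{0<..e'}. expn_val A x \<noteq> 0) \<longrightarrow>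
           expn_eq_on e' (expn_mult A (expn_inv A)) (expn_one (hi A - lo A))))
    \<and> expn_eq_on e0 (expn_add A B) (expn_add B A)
    \<and> expn_eq_on e0 (expn_add (expn_add A B) C) (expn_add A (expn_add B C))
    \<and> expn_eq_on e0 (expn_mult A B) (expn_mult B A)
    \<and> expn_eq_on e0 (expn_mult (expn_mult A B) C) (expn_mult A (expn_mult B C))
    \<and> expn_eq_on e0 (expn_mult (expn_add A B) C) (expn_add (expn_mult A C) (expn_mult B C))"
proof -
  have "lo A \<le> hi A"
    using \<open>is_expn A\<close> by (simp add: is_expn_def)
  then show ?thesis
    by (simp del: expn_add_sel expn_mult_sel add: expn_add_zero expn_mult_one expn_add_neg
        expn_mult_inverse expn_add_commute expn_add_assoc expn_mult_commute expn_mult_assoc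
        expn_mult_distrib)
qed

end
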